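(* Let $(X,\mathcal T,P,\leq,\{\sigma_x:x\in X\})$ be a $p$-symmetrically typed topological space for a type $p\in P$, and assume $\sigma$ has least $p$-neighborhood. Then for every $x\in X$: (1) for every $y\in X$, $y\in p\vdash CL_1(\{x\})$ iff $x\in p\vdash CL_1(\{y\})$; (2) $p\vdash C(x)=p\vdash tr(\{x\})$; (3) for every $y\in p\vdash tr(\{x\})$, $p\vdash tr(\{x\})=p\vdash tr(\{y\})$.
   Context: A typed topological space $(X,\mathcal T,P,\leq,\{\sigma_x:x\in X\})$ consists of a topological space $(X,\mathcal T)$, a partially ordered set $(P,\leq)$ of types, and for each $x\in X$ a partial function $\sigma_x:\{O\in\mathcal T:x\in O\}\to P$ such that for all $U,V$ in its domain, $\sigma_x(U)\leq\sigma_x(V)$ iff $U\subseteq V$. $U$ is a type-$p$ neighborhood of $x$ ($p\vdash U(x)$) if $U$ is in the domain of $\sigma_x$ and $\sigma_x(U)=p$. $x$ is a $p$-accumulation point of $A$ if every type-$p$ neighborhood of $x$ meets $A$. $p\vdash CL_1(A)=A\cup\{p\text{-accumulation points of }A\}$, $p\vdash CL_n(A)=p\vdash CL_1(p\vdash CL_{n-1}(A))$, $p\vdash tr(A)=\bigcup_{n\ge1}p\vdash CL_n(A)$. $\sigma$ has least $p$-neighborhood if every $x$ has a type-$p$ neighborhood $p\vdash U_{min}(x)$ contained in every type-$p$ neighborhood of $x$. $X$ is $p$-symmetrically typed if for any $x,y\in X$ such that $y\notin U$ for some type-$p$ neighborhood $U$ of $x$, there is a type-$p$ neighborhood $V$ of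 $y$ with $x\notin V$. A set $A$ is type-$p$-connected if there do not exist families of type-$p$ neighborhoods $\{p\vdash U(x_i):i\in I\}$, $\{p\vdash U(x_j):j\in J\}$ with $I,J\neq\emptyset$, $A=\{x_i:i\in I\}\cup\{x_j:j\in J\}$ and $\bigcup_{i\in I}U(x_i)\cap\bigcup_{j\in J}U(x_j)=\emptyset$. $p\vdash C(x)$ is the union of all type-$p$-connected sets containing $x$. *)

theory Defs
  imports "HOL-Analysis.Abstract_Topology"
begin

text \<open>A typed topological space: topology T (carrier X = topspace T), a poset of
types given by a type of class order, and for each point x a partial function
sig x from the open sets containing x to types, reflecting inclusion.\<close>

definition typed_top :: "'a topology \<Rightarrow> ('a \<Rightarrow> 'a set \<Rightarrow> 'p::order option) \<Rightarrow> bool" where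
  "typed_top T sig \<longleftrightarrow>
     (\<forall>x U. sig x U \<noteq> None \<longrightarrow> openin T U \<and> x \<in> U) \<and>
     (\<forall>x U V p q. sig x U = Some p \<longrightarrow> sig x V = Some q \<longrightarrow> (p \<le> q \<longleftrightarrow> U \<subseteq> V))"

definition tnbhd :: "('a \<Rightarrow> 'a set \<Rightarrow> 'p option) \<Rightarrow> 'p \<Rightarrow> 'a \<Rightarrow> 'a set \<Rightarrow> bool" where
  "tnbhd sig p x U \<longleftrightarrow> sig x U = Some p"

definition acc_pt :: "'a topology \<Rightarrow> ('a \<Rightarrow> 'a set \<Rightarrow> 'p option) \<Rightarrow> 'p \<Rightarrow> 'a set \<Rightarrow> 'a \<Rightarrow> bool" where
  "acc_pt T sig p A x \<longleftrightarrow> x \<in> topspace T \<and> (\<forall>U. tnbhd sig p x U \<longrightarrow> U \<inter> A \<noteq> {})"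

definition CL1 :: "'a topology \<Rightarrow> ('a \<Rightarrow> 'a set \<Rightarrow> 'p option) \<Rightarrow> 'p \<Rightarrow> 'a set \<Rightarrow> 'a set" where
  "CL1 T sig p A = A \<union> {x. acc_pt T sig p A x}"

definition CLn :: "'a topology \<Rightarrow> ('a \<Rightarrow> 'a set \<Rightarrow> 'p option) \<Rightarrow> 'p \<Rightarrow> nat \<Rightarrow> 'a set \<Rightarrow> 'a set" where
  "CLn T sig p n A = (CL1 T sig p ^^ n) A"

definition tr :: "'a topology \<Rightarrow> ('a \<Rightarrow> 'a set \<Rightarrow> 'p option) \<Rightarrow> 'p \<Rightarrow> 'a set \<Rightarrow> 'a set" where
  "tr T sig p A = (\<Union>n\<in>{1..}. CLn T sig p n A)"

definition least_nbhd :: "'a topology \<Rightarrow> ('a \<Rightarrow> 'a set \<Rightarrow> 'p option) \<Rightarrow> 'p \<Rightarrow> bool" where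
  "least_nbhd T sig p \<longleftrightarrow>
     (\<forall>x\<in>topspace T. \<exists>U. tnbhd sig p x U \<and> (\<forall>V. tnbhd sig p x V \<longrightarrow> U \<subseteq> V))"

definition p_symmetric :: "'a topology \<Rightarrow> ('a \<Rightarrow> 'a set \<Rightarrow> 'p option) \<Rightarrow> 'p \<Rightarrow> bool" where
  "p_symmetric T sig p \<longleftrightarrow>
     (\<forall>x\<in>topspace T. \<forall>y\<in>topspace T.
        (\<exists>U. tnbhd sig p x U \<and> y \<notin> U) \<longrightarrow> (\<exists>V. tnbhd sig p y V \<and> x \<notin> V))"

text \<open>Type-p-connectedness. The families indexed by I and J are represented by
their sets of points B, C together with a choice of type-p neighborhood for each
point (f on B, g on C).\<close>
definition tconnected :: "('a \<Rightarrow> 'a set \<Rightarrow> 'p option) \<Rightarrow> 'p \<Rightarrow> 'a set \<Rightarrow> bool" where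
  "tconnected sig p A \<longleftrightarrow>
     \<not> (\<exists>B C f g. B \<noteq> {} \<and> C \<noteq> {} \<and> A = B \<union> C \<and>
          (\<forall>x\<in>B. tnbhd sig p x (f x)) \<and> (\<forall>y\<in>C. tnbhd sig p y (g y)) \<and>
          (\<Union>x\<in>B. f x) \<inter> (\<Union>y\<in>C. g y) = {})"

definition tcomp :: "'a topology \<Rightarrow> ('a \<Rightarrow> 'a set \<Rightarrow> 'p option) \<Rightarrow> 'p \<Rightarrow> 'a \<Rightarrow> 'a set" where
  "tcomp T sig p x = \<Union>{A. A \<subseteq> topspace T \<and> tconnected sig p A \<and> x \<in> A}"

end

theory Submission
  imports Defs
begin

text \<open>Since types reflect inclusion, a point has at most one type-\<open>p\<close> neighborhood, and with
least neighborhoods exactly one, say \<open>N y\<close>. Call \<open>z\<close> adjacent to \<open>y\<close> if \<open>z \<in> N y\<close>;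
\<open>p\<close>-symmetry makes this relation symmetric. A point is a \<open>p\<close>-accumulation point of \<open>A\<close> iff it is
adjacent to a point of \<open>A\<close>, so \<open>p\<turnstile>tr({x})\<close> is the class of \<open>x\<close> under the equivalence relation
generated by adjacency. A separation of this class would need an adjacency leaving one side, so
the class is type-\<open>p\<close>-connected; conversely a type-\<open>p\<close>-connected set containing \<open>x\<close> lies in
the class, since otherwise its parts inside and outside the class, with the neighborhoods \<open>N\<close>,
would separate it.\<close>

locale typed_space =
  fixes T :: "'a topology" and sig :: "'a \<Rightarrow> 'a set \<Rightarrow> 'p::order option" and p :: 'p
  assumes typed_top: "typed_top T sig"
begin

definition adjacent :: "'a \<Rightarrow> 'a \<Rightarrow> bool" where
  "adjacent y z \<longleftrightarrow> (\<exists>U. tnbhd sig p y U \<and> z \<in> U)"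

lemma tnbhd_unique: "tnbhd sig p x U \<Longrightarrow> tnbhd sig p x V \<Longrightarrow> U = V"
  using typed_top unfolding typed_top_def tnbhd_def by (metis order_refl subset_antisym)

lemma tnbhd_mem: "tnbhd sig p x U \<Longrightarrow> x \<in> U"
  using typed_top unfolding typed_top_def tnbhd_def by blast

lemma tnbhd_subset_topspace: "tnbhd sig p x U \<Longrightarrow> U \<subseteq> topspace T"
  using typed_top unfolding typed_top_def tnbhd_def by (metis openin_subset option.distinct(1))

lemma adjacent_topspace: "adjacent y z \<Longrightarrow> y \<in> topspace T \<and> z \<in> topspace T"
  unfolding adjacent_def using tnbhd_mem tnbhd_subset_topspace by blast

lemma rtranclp_adjacent_topspace: "adjacent\<^sup>*\<^sup>* x y \<Longrightarrow> x \<in> topspace T \<Longrightarrow> y \<in> topspace T"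
  by (induction rule: rtranclp_induct) (auto dest: adjacent_topspace)

lemma separation_not_adjacent:
  assumes "\<forall>y\<in>B. tnbhd sig p y (f y)" and "\<forall>z\<in>C. tnbhd sig p z (g z)"
    and "(\<Union>y\<in>B. f y) \<inter> (\<Union>z\<in>C. g z) = {}"
    and "y \<in> B" and "z \<in> C"
  shows "\<not> adjacent y z"
proof
  assume "adjacent y z"
  then obtain U where "tnbhd sig p y U" "z \<in> U" unfolding adjacent_def by blast
  then have "z \<in> f y" using tnbhd_unique assms(1,4) by blast
  moreover have "z \<in> g z" using tnbhd_mem assms(2,5) by blast
  ultimately show False using assms(3-5) by blast
qed

lemma separation_of_class_trivial:
  assumes "Collect (adjacent\<^sup>*\<^sup>* x) = B \<union> C" and "x \<in> B"
    and f: "\<forall>y\<in>B. tnbhd sig p y (f y)" and g: "\<forall>z\<in>C. tnbhd sig p z (g z)"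
    and disjoint: "(\<Union>y\<in>B. f y) \<inter> (\<Union>z\<in>C. g z) = {}"
  shows "C = {}"
proof -
  have class_in_B: "adjacent\<^sup>*\<^sup>* x y \<Longrightarrow> y \<in> B" for y
  proof (induction rule: rtranclp_induct)
    case base
    show ?case using \<open>x \<in> B\<close> .
  next
    case (step y z)
    have "z \<in> Collect (adjacent\<^sup>*\<^sup>* x)"
      using step.hyps by (simp add: rtranclp.rtrancl_into_rtrancl)
    then have "z \<in> B \<union> C" unfolding assms(1) .
    moreover have "z \<notin> C"
      using separation_not_adjacent[OF f g disjoint step.IH] step.hyps(2) by blast
    ultimately show ?case by blast
  qed
  have "c \<notin> C" for c
  proof
    assume "c \<in> C"
    then have "c \<in> Collect (adjacent\<^sup>*\<^sup>* x)" unfolding assms(1) ..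
    then have "c \<in> B" using class_in_B by simp
    moreover have "adjacent c c" using f \<open>c \<in> B\<close> tnbhd_mem unfolding adjacent_def by blast
    ultimately show False using separation_not_adjacent[OF f g disjoint _ \<open>c \<in> C\<close>] by blast
  qed
  then show "C = {}" by blast
qed

lemma tconnected_adjacent_class: "tconnected sig p (Collect (adjacent\<^sup>*\<^sup>* x))"
  unfolding tconnected_def
proof (intro notI, elim exE conjE)
  fix B C f g
  assume "B \<noteq> {}" "C \<noteq> {}" and split: "Collect (adjacent\<^sup>*\<^sup>* x) = B \<union> C"
    and f: "\<forall>y\<in>B. tnbhd sig p y (f y)" and g: "\<forall>z\<in>C. tnbhd sig p z (g z)"
    and disjoint: "(\<Union>y\<in>B. f y) \<inter> (\<Union>z\<in>C. g z) = {}"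
  have "x \<in> B \<union> C" using split by auto
  then show False
  proof
    assume "x \<in> B"
    then show False
      using separation_of_class_trivial[of x B C f g] \<open>C \<noteq> {}\<close> split disjoint f g by blast
  next
    assume "x \<in> C"
    then show False
      using separation_of_class_trivial[of x C B g f] \<open>B \<noteq> {}\<close> split disjoint f g
      by (simp add: Un_commute Int_commute)
  qed
qed

end

locale least_typed_space = typed_space +
  assumes least_nbhd: "least_nbhd T sig p"
begin

lemma tnbhd_exists: "x \<in> topspace T \<Longrightarrow> \<exists>U. tnbhd sig p x U"
  using least_nbhd unfolding least_nbhd_def by blast

lemma acc_pt_iff_adjacent: "acc_pt T sig p A y \<longleftrightarrow> y \<in> topspace T \<and> (\<exists>a\<in>A. adjacent y a)"
  unfolding acc_pt_def adjacent_def using tnbhd_exists tnbhd_unique by blast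

lemma CL1_eq_adjacent: "CL1 T sig p A = A \<union> {y \<in> topspace T. \<exists>a\<in>A. adjacent y a}"
  unfolding CL1_def acc_pt_iff_adjacent by auto

end

locale symmetric_typed_space = least_typed_space +
  assumes p_symmetric: "p_symmetric T sig p"
begin

lemma symp_adjacent: "symp adjacent"
proof (rule sympI)
  fix y z
  assume "adjacent y z"
  then obtain U where U: "tnbhd sig p y U" "z \<in> U" unfolding adjacent_def by blast
  have top: "y \<in> topspace T" "z \<in> topspace T" using adjacent_topspace \<open>adjacent y z\<close> by auto
  obtain V where V: "tnbhd sig p z V" using tnbhd_exists top by blast
  show "adjacent z y"
  proof (rule ccontr)
    assume "\<not> adjacent z y"
    then have "y \<notin> V" using V adjacent_def by blast
    then obtain W where "tnbhd sig p y W" "z \<notin> W"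
      using p_symmetric top V unfolding p_symmetric_def by blast
    with U tnbhd_unique show False by blast
  qed
qed

lemma CLn_subset_rtranclp_adjacent: "CLn T sig p n A \<subseteq> {y. \<exists>a\<in>A. adjacent\<^sup>*\<^sup>* a y}"
proof (induction n)
  case 0
  show ?case by (auto simp: CLn_def)
next
  case (Suc n)
  have "adjacent\<^sup>*\<^sup>* a z" if "adjacent\<^sup>*\<^sup>* a y" "adjacent z y" for a y z
    using that symp_adjacent by (meson rtranclp.rtrancl_into_rtrancl sympD)
  then show ?case using Suc.IH by (fastforce simp: CLn_def CL1_eq_adjacent)
qed

lemma rtranclp_adjacent_in_CLn:
  assumes "adjacent\<^sup>*\<^sup>* a y" and "a \<in> A"
  shows "\<exists>n\<ge>1. y \<in> CLn T sig p n A"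
  using assms(1)
proof (induction rule: rtranclp_induct)
  case base
  show ?case using \<open>a \<in> A\<close> by (intro exI[of _ 1]) (simp add: CLn_def CL1_def)
next
  case (step y z)
  then obtain n where "n \<ge> 1" "y \<in> CLn T sig p n A" by blast
  moreover have "adjacent z y" using step.hyps(2) symp_adjacent by (simp add: sympD)
  ultimately have "z \<in> CLn T sig p (Suc n) A"
    using adjacent_topspace by (auto simp: CLn_def CL1_eq_adjacent)
  then show ?case by (intro exI[of _ "Suc n"]) simp
qed

lemma tr_eq_rtranclp_adjacent: "tr T sig p A = {y. \<exists>a\<in>A. adjacent\<^sup>*\<^sup>* a y}"
  unfolding tr_def using CLn_subset_rtranclp_adjacent rtranclp_adjacent_in_CLn by fastforce

lemma tconnected_subset_adjacent_class:
  assumes "A \<subseteq> topspace T" and "tconnected sig p A" and "x \<in> A"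
  shows "A \<subseteq> Collect (adjacent\<^sup>*\<^sup>* x)"
proof (rule ccontr)
  define K where "K = Collect (adjacent\<^sup>*\<^sup>* x)"
  assume "\<not> A \<subseteq> Collect (adjacent\<^sup>*\<^sup>* x)"
  then have outside: "A - K \<noteq> {}" unfolding K_def by blast
  have inside: "A \<inter> K \<noteq> {}" using \<open>x \<in> A\<close> unfolding K_def by blast
  obtain N where N: "\<forall>y\<in>topspace T. tnbhd sig p y (N y)"
    using bchoice[of "topspace T" "tnbhd sig p"] tnbhd_exists by blast
  have disjoint: "(\<Union>y\<in>A \<inter> K. N y) \<inter> (\<Union>y\<in>A - K. N y) = {}"
  proof (rule ccontr)
    assume "(\<Union>y\<in>A \<inter> K. N y) \<inter> (\<Union>y\<in>A - K. N y) \<noteq> {}"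
    then obtain z b c where z: "b \<in> A \<inter> K" "c \<in> A - K" "z \<in> N b" "z \<in> N c" by blast
    then have "adjacent b z" "adjacent c z"
      using N assms(1) unfolding adjacent_def by blast+
    then have "adjacent\<^sup>*\<^sup>* b c"
      using symp_adjacent by (meson converse_rtranclp_into_rtranclp r_into_rtranclp sympD)
    moreover have "adjacent\<^sup>*\<^sup>* x b" using z(1) unfolding K_def by simp
    ultimately have "c \<in> K" unfolding K_def by (simp add: rtranclp_trans)
    then show False using z(2) by blast
  qed
  have "\<exists>B C f g. B \<noteq> {} \<and> C \<noteq> {} \<and> A = B \<union> C \<and>
      (\<forall>x\<in>B. tnbhd sig p x (f x)) \<and> (\<forall>y\<in>C. tnbhd sig p y (g y)) \<and>
      (\<Union>x\<in>B. f x) \<inter> (\<Union>y\<in>C. g y) = {}"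
  proof (intro exI conjI)
    show "A = (A \<inter> K) \<union> (A - K)" by blast
    show "\<forall>y\<in>A \<inter> K. tnbhd sig p y (N y)" "\<forall>y\<in>A - K. tnbhd sig p y (N y)"
      using N assms(1) by blast+
  qed (fact inside outside disjoint)+
  then show False using assms(2) unfolding tconnected_def by blast
qed

lemma tcomp_eq_adjacent_class:
  assumes "x \<in> topspace T"
  shows "tcomp T sig p x = Collect (adjacent\<^sup>*\<^sup>* x)"
  unfolding tcomp_def
proof
  show "\<Union>{A. A \<subseteq> topspace T \<and> tconnected sig p A \<and> x \<in> A} \<subseteq> Collect (adjacent\<^sup>*\<^sup>* x)"
    by (rule Union_least) (simp add: tconnected_subset_adjacent_class)
  show "Collect (adjacent\<^sup>*\<^sup>* x) \<subseteq> \<Union>{A. A \<subseteq> topspace T \<and> tconnected sig p A \<and> x \<in> A}"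
    using tconnected_adjacent_class rtranclp_adjacent_topspace assms by (intro Union_upper) auto
qed

end

theorem theorem2p18:
  fixes T :: "'a topology" and sig :: "'a \<Rightarrow> 'a set \<Rightarrow> 'p::order option" and p :: 'p
  assumes "typed_top T sig"
    and "p_symmetric T sig p"
    and "least_nbhd T sig p"
    and "x \<in> topspace T"
  shows "(\<forall>y\<in>topspace T. y \<in> CL1 T sig p {x} \<longleftrightarrow> x \<in> CL1 T sig p {y})
       \<and> tcomp T sig p x = tr T sig p {x}
       \<and> (\<forall>y\<in>tr T sig p {x}. tr T sig p {x} = tr T sig p {y})"
proof -
  interpret symmetric_typed_space T sig p
    using assms(1-3) by unfold_locales
  have tr_singleton: "tr T sig p {z} = Collect (adjacent\<^sup>*\<^sup>* z)" for z
    by (simp add: tr_eq_rtranclp_adjacent)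
  have "y \<in> CL1 T sig p {x} \<longleftrightarrow> x \<in> CL1 T sig p {y}" if "y \<in> topspace T" for y
    using that assms(4) symp_adjacent by (auto simp: CL1_eq_adjacent dest: sympD)
  moreover have "tcomp T sig p x = tr T sig p {x}"
    using tcomp_eq_adjacent_class[OF assms(4)] tr_singleton by simp
  moreover have "tr T sig p {x} = tr T sig p {y}" if "y \<in> tr T sig p {x}" for y
    using that equivp_rtranclp[OF symp_adjacent] by (simp add: tr_singleton equivp_def)
  ultimately show ?thesis by blast
qed

end
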